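(* Let $M\ge K\ge 1$, $N\ge1$, $\sigma^2>0$, and let $\boldsymbol{H}_{\mathrm d}=[\boldsymbol h_{\mathrm d,1},\dots,\boldsymbol h_{\mathrm d,K}]\in\mathbb C^{M\times K}$, $\boldsymbol H_{\mathrm r}=[\boldsymbol h_{\mathrm r,1},\dots,\boldsymbol h_{\mathrm r,K}]\in\mathbb C^{N\times K}$ and $\boldsymbol G\in\mathbb C^{M\times N}$. Assume that $\boldsymbol H_{\mathrm d}$ has full column rank $K$ and that $$\sigma_{\max}(\boldsymbol G)\,\sigma_{\max}(\boldsymbol H_{\mathrm r})<\sigma_{\min}(\boldsymbol H_{\mathrm d}).$$ Then for arbitrary targets $r_1,\dots,r_K\ge 0$, problem (P1) with unlimited power budgets is feasible: there exist $\boldsymbol\phi\in\mathbb C^N$ with $|\phi_n|=1$ for all $n$ and $\boldsymbol q\in\mathbb R^K$, $\boldsymbol q>\boldsymbol 0$, such that $\widetilde\gamma_k(\boldsymbol\phi,\boldsymbol q)\ge r_k$ for all $k=1,\dots,K$.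
   Context: For $\boldsymbol\phi\in\mathbb C^N$ with unit-modulus entries, let $\boldsymbol\Phi=\mathrm{Diag}(\boldsymbol\phi)$ and define the effective channels $\boldsymbol h_k(\boldsymbol\phi)=\boldsymbol G\boldsymbol\Phi\boldsymbol h_{\mathrm r,k}+\boldsymbol h_{\mathrm d,k}$, $k=1,\dots,K$. For powers $\boldsymbol q=(q_1,\dots,q_K)\ge \boldsymbol 0$ set $\boldsymbol W_k(\boldsymbol\phi,\boldsymbol q)=\sigma^2\boldsymbol I_M+\sum_{i\ne k}q_i\boldsymbol h_i(\boldsymbol\phi)\boldsymbol h_i(\boldsymbol\phi)^H$ and define the (optimal linear receiver) SINR of user $k$ as $\widetilde\gamma_k(\boldsymbol\phi,\boldsymbol q)=q_k\,\boldsymbol h_k(\boldsymbol\phi)^H\boldsymbol W_k(\boldsymbol\phi,\boldsymbol q)^{-1}\boldsymbol h_k(\boldsymbol\phi)$. $\sigma_{\max}(\boldsymbol X)$ and $\sigma_{\min}(\boldsymbol X)$ denote the largest and smallest nonzero singular values of a matrix $\boldsymbol X$. Problem (P1) with unlimited power means: find $(\boldsymbol\phi,\boldsymbol q)$ with $|\phi_n|=1$ for all $n$, $\boldsymbol q\ge\boldsymbol 0$ (no upper bound), and $\widetilde\gamma_k(\boldsymbol\phi,\boldsymbol q)\ge r_k$ for all $k$. *)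

theory Defs
  imports "HOL-Analysis.Analysis"
begin

definition ctrans :: "complex^'n^'m \<Rightarrow> complex^'m^'n" where
  "ctrans A = (\<chi> i j. cnj (A $ j $ i))"

definition sing_vals :: "complex^'n^'m \<Rightarrow> real set" where
  "sing_vals A = {s. s > 0 \<and> (\<exists>v. v \<noteq> 0 \<and> (ctrans A ** A) *v v = (\<chi> i. complex_of_real (s^2) * v $ i))}"

text \<open>Largest / smallest nonzero singular value (convention: 0 for the zero matrix).\<close>
definition sigma_max :: "complex^'n^'m \<Rightarrow> real" where
  "sigma_max A = (if sing_vals A = {} then 0 else Max (sing_vals A))"

definition sigma_min :: "complex^'n^'m \<Rightarrow> real" where
  "sigma_min A = (if sing_vals A = {} then 0 else Min (sing_vals A))"

definition diag_mat :: "complex^'n \<Rightarrow> complex^'n^'n" where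
  "diag_mat v = (\<chi> i j. if i = j then v $ i else 0)"

definition col :: "'a::zero^'k^'m \<Rightarrow> 'k \<Rightarrow> 'a^'m" where
  "col A k = (\<chi> i. A $ i $ k)"

definition eff_chan ::
  "complex^'n^'m \<Rightarrow> complex^'k^'n \<Rightarrow> complex^'k^'m \<Rightarrow> complex^'n \<Rightarrow> 'k \<Rightarrow> complex^'m" where
  "eff_chan G Hr Hd phi k = (G ** diag_mat phi) *v col Hr k + col Hd k"

definition outer :: "complex^'m \<Rightarrow> complex^'m^'m" where
  "outer h = (\<chi> i j. h $ i * cnj (h $ j))"

definition herm_form :: "complex^'m \<Rightarrow> complex^'m^'m \<Rightarrow> complex^'m \<Rightarrow> complex" where
  "herm_form x A y = (\<Sum>i\<in>UNIV. cnj (x $ i) * (A *v y) $ i)"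

definition W_mat ::
  "real \<Rightarrow> complex^'n^'m \<Rightarrow> complex^'k^'n \<Rightarrow> complex^'k^'m \<Rightarrow> complex^'n \<Rightarrow> real^'k \<Rightarrow> 'k \<Rightarrow> complex^'m^'m" where
  "W_mat sigma2 G Hr Hd phi q k =
     mat (complex_of_real sigma2)
     + (\<Sum>i\<in>UNIV - {k}. (\<chi> a b. complex_of_real (q $ i) * outer (eff_chan G Hr Hd phi i) $ a $ b))"

text \<open>SINR of user k with the optimal linear (MMSE) receiver.\<close>
definition sinr ::
  "real \<Rightarrow> complex^'n^'m \<Rightarrow> complex^'k^'n \<Rightarrow> complex^'k^'m \<Rightarrow> complex^'n \<Rightarrow> real^'k \<Rightarrow> 'k \<Rightarrow> complex" where
  "sinr sigma2 G Hr Hd phi q k =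
     complex_of_real (q $ k) *
       herm_form (eff_chan G Hr Hd phi k) (matrix_inv (W_mat sigma2 G Hr Hd phi q k)) (eff_chan G Hr Hd phi k)"

end

theory Submission
  imports Defs
begin

(* With all phases equal to 1 the effective channels are the columns of H = G Hr + Hd, and the
   singular value hypothesis makes H injective:
   |Hd c| >= sigma_min(Hd) |c| > sigma_max(G) sigma_max(Hr) |c| >= |G Hr c| for c \<noteq> 0.
   A left inverse of H provides zero-forcing vectors u_k with u_k^H h_i = delta_ki. For
   y = W_k^-1 h_k, applying u_k^H to W_k y = h_k annihilates the interference, so
   sigma^2 u_k^H y = 1 and |y| >= 1 / (sigma^2 |u_k|). Since h_k^H y = y^H W_k y >= sigma^2 |y|^2,
   the SINR is at least q_k / (sigma^2 |u_k|^2), which exceeds r_k for q_k large enough. *)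

definition cinner :: "complex^'n \<Rightarrow> complex^'n \<Rightarrow> complex" where
  "cinner x y = (\<Sum>i\<in>UNIV. cnj (x $ i) * y $ i)"

lemma inner_eq_Re_cinner: "inner x y = Re (cinner x y)"
  by (simp add: cinner_def inner_vec_def inner_complex_def Re_sum mult.commute)

lemma cinner_self: "cinner x x = of_real ((norm x)^2)"
  by (simp add: cinner_def power2_norm_eq_inner inner_vec_def inner_complex_def complex_eq_iff
      Re_sum Im_sum mult.commute)

lemma cinner_commute: "cinner y x = cnj (cinner x y)"
  by (simp add: cinner_def mult.commute)

lemma cinner_add_right: "cinner x (y + z) = cinner x y + cinner x z"
  by (simp add: cinner_def distrib_left sum.distrib)

lemma cinner_scale_right: "cinner x (c *s y) = c * cinner x y"
  by (simp add: cinner_def sum_distrib_left mult_ac)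

lemma cinner_sum_right: "cinner x (\<Sum>i\<in>I. f i) = (\<Sum>i\<in>I. cinner x (f i))"
  by (simp add: cinner_def sum_component sum_distrib_left sum.swap[of _ I])

lemma cinner_ctrans: "cinner (A *v x) y = cinner x (ctrans A *v y)"
proof -
  have "cinner (A *v x) y = (\<Sum>i\<in>UNIV. \<Sum>j\<in>UNIV. cnj (A $ i $ j * x $ j) * y $ i)"
    by (simp add: cinner_def matrix_vector_mult_def sum_distrib_right)
  also have "\<dots> = (\<Sum>j\<in>UNIV. \<Sum>i\<in>UNIV. cnj (A $ i $ j * x $ j) * y $ i)"
    by (rule sum.swap)
  also have "\<dots> = cinner x (ctrans A *v y)"
    by (simp add: cinner_def matrix_vector_mult_def ctrans_def sum_distrib_left mult_ac)
  finally show ?thesis .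
qed

lemma inner_ctrans: "inner (A *v x) y = inner x (ctrans A *v y)"
  by (simp add: inner_eq_Re_cinner cinner_ctrans)

lemma matrix_vector_mult_scaleR_right:
  fixes A :: "'a::real_algebra_1^'n^'m"
  shows "A *v (c *\<^sub>R x) = c *\<^sub>R (A *v x)"
  using linear_iff matrix_vector_mul_linear by blast

lemma matrix_inv_right:
  assumes "invertible A"
  shows "A ** matrix_inv A = mat 1"
  using assms unfolding invertible_def matrix_inv_def by (rule someI_ex[THEN conjunct1])

lemma full_column_rank_imp_inj:
  fixes A :: "'a::field^'k^'m"
  assumes "rank A = CARD('k)" and "A *v x = 0"
  shows "x = 0"
proof -
  have "vec.dim (rows A) = vec.dim (UNIV :: ('a^'k) set)"
    using assms(1) by (metis row_rank_def_gen vec_dim_card)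
  then have "vec.span (rows A) = UNIV"
    by (metis vec.dim_eq_full vec.dim_UNIV vec.dimension_def)
  then have "\<exists>B. B ** A = mat 1"
    by (simp add: matrix_left_invertible_span_rows_gen)
  with assms(2) show ?thesis
    by (simp add: matrix_left_invertible_ker)
qed

lemma selfadjoint_psd_kernel:
  fixes f :: "'a::real_inner \<Rightarrow> 'a"
  assumes "linear f"
    and selfadjoint: "\<And>x y. inner (f x) y = inner x (f y)"
    and psd: "\<And>x. inner (f x) x \<ge> 0"
    and "inner (f v) v = 0"
  shows "f v = 0"
proof -
  interpret f: linear f by fact
  define a where "a = inner (f v) (f v)"
  define b where "b = inner (f (f v)) (f v)"
  have expand: "inner (f (v + t *\<^sub>R f v)) (v + t *\<^sub>R f v) = 2 * t * a + t^2 * b" for t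
    using \<open>inner (f v) v = 0\<close> selfadjoint[of "f v" v]
    by (simp add: f.add f.scale inner_add inner_commute a_def b_def
        power2_eq_square algebra_simps)
  have "b \<ge> 0" by (simp add: b_def psd)
  \<comment> \<open>The form is nonnegative on the line v + t f v; a small negative t forces a = 0.\<close>
  define t where "t = - a / (b + 1)"
  have "0 \<le> 2 * t * a + t^2 * b"
    using psd[of "v + t *\<^sub>R f v"] expand[of t] by simp
  moreover have "(b + 1)^2 * (2 * t * a + t^2 * b) = - (a^2 * (b + 2))"
    using \<open>b \<ge> 0\<close>
    by (simp add: t_def power2_eq_square divide_simps) (simp add: algebra_simps)
  ultimately have "a^2 * (b + 2) \<le> 0"
    by (metis neg_0_le_iff_le zero_le_mult_iff zero_le_power2)
  then have "a = 0"
    using \<open>b \<ge> 0\<close> by (simp add: mult_le_0_iff)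
  then show ?thesis by (simp add: a_def)
qed

lemma norm_mult_vector_normalized:
  "norm ((A::complex^'n^'m) *v x) = norm x * norm (A *v (x /\<^sub>R norm x))"
  by (cases "x = 0") (simp_all add: matrix_vector_mult_scaleR_right)

lemma continuous_on_norm_matrix_vector: "continuous_on S (\<lambda>x. norm ((A::complex^'n^'m) *v x))"
  using matrix_vector_mul_linear[of A] linear_conv_bounded_linear
  by (intro continuous_on_norm linear_continuous_on) auto

lemma rayleigh_max_exists:
  fixes A :: "complex^'n^'m"
  obtains v where "norm v = 1" "\<And>x. norm (A *v x) \<le> norm (A *v v) * norm x"
proof -
  have "continuous_on (sphere 0 1) (\<lambda>x. norm (A *v x))"
    by (rule continuous_on_norm_matrix_vector)
  moreover have "sphere (0::complex^'n) 1 \<noteq> {}" by simp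
  ultimately obtain v :: "complex^'n" where v: "v \<in> sphere 0 1"
    and max: "\<And>y. y \<in> sphere 0 1 \<Longrightarrow> norm (A *v y) \<le> norm (A *v v)"
    using continuous_attains_sup[OF compact_sphere] by blast
  have "norm (A *v x) \<le> norm (A *v v) * norm x" for x
    using max[of "x /\<^sub>R norm x"] norm_mult_vector_normalized[of A x]
    by (cases "x = 0") (auto simp: mult_left_mono mult.commute)
  then show thesis using that v by simp
qed

lemma rayleigh_min_exists:
  fixes A :: "complex^'n^'m"
  obtains v where "norm v = 1" "\<And>x. norm (A *v v) * norm x \<le> norm (A *v x)"
proof -
  have "continuous_on (sphere 0 1) (\<lambda>x. norm (A *v x))"
    by (rule continuous_on_norm_matrix_vector)
  moreover have "sphere (0::complex^'n) 1 \<noteq> {}" by simp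
  ultimately obtain v :: "complex^'n" where v: "v \<in> sphere 0 1"
    and min: "\<And>y. y \<in> sphere 0 1 \<Longrightarrow> norm (A *v v) \<le> norm (A *v y)"
    using continuous_attains_inf[OF compact_sphere] by blast
  have "norm (A *v v) * norm x \<le> norm (A *v x)" for x
    using min[of "x /\<^sub>R norm x"] norm_mult_vector_normalized[of A x]
    by (cases "x = 0") (auto simp: mult_left_mono mult.commute)
  then show thesis using that v by simp
qed

lemma inner_gram: "inner (ctrans A *v (A *v x)) y = inner (A *v x) (A *v y)"
  by (metis inner_commute inner_ctrans)

lemma inner_gram_shift:
  "inner (ctrans A *v (A *v x) - c *\<^sub>R x) y = inner (A *v x) (A *v y) - c * inner x y"
  by (simp add: inner_diff_left inner_gram)

lemma linear_gram_shift: "linear (\<lambda>x. ctrans A *v (A *v x) - c *\<^sub>R (x::complex^'n))"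
  by (rule linearI)
    (simp_all add: matrix_vector_right_distrib matrix_vector_mult_scaleR_right algebra_simps)

lemma gram_eigen_max:
  fixes A :: "complex^'n^'m"
  assumes "norm v = 1" and max: "\<And>x. norm (A *v x) \<le> norm (A *v v) * norm x"
  shows "ctrans A *v (A *v v) = (norm (A *v v))^2 *\<^sub>R v"
proof -
  define f where "f x = (norm (A *v v))^2 *\<^sub>R x - ctrans A *v (A *v x)" for x
  have "f v = 0"
  proof (rule selfadjoint_psd_kernel[of f])
    show "linear f"
      unfolding f_def using linear_compose_neg[OF linear_gram_shift] by simp
    show "inner (f x) y = inner x (f y)" for x y
      using inner_gram_shift[of A x _ y] inner_gram_shift[of A y _ x]
      by (simp add: f_def inner_commute algebra_simps)
    show "inner (f x) x \<ge> 0" for x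
      using power_mono[OF max[of x] norm_ge_zero] inner_gram_shift[of A x _ x]
      by (simp add: f_def algebra_simps power_mult_distrib dot_square_norm)
    show "inner (f v) v = 0"
      using inner_gram_shift[of A v _ v]
      by (simp add: f_def algebra_simps dot_square_norm \<open>norm v = 1\<close>)
  qed
  then show ?thesis by (simp add: f_def)
qed

lemma gram_eigen_min:
  fixes A :: "complex^'n^'m"
  assumes "norm v = 1" and min: "\<And>x. norm (A *v v) * norm x \<le> norm (A *v x)"
  shows "ctrans A *v (A *v v) = (norm (A *v v))^2 *\<^sub>R v"
proof -
  define f where "f x = ctrans A *v (A *v x) - (norm (A *v v))^2 *\<^sub>R x" for x
  have "f v = 0"
  proof (rule selfadjoint_psd_kernel[of f])
    show "linear f"
      unfolding f_def by (rule linear_gram_shift)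
    show "inner (f x) y = inner x (f y)" for x y
      using inner_gram_shift[of A x _ y] inner_gram_shift[of A y _ x]
      by (simp add: f_def inner_commute)
    show "inner (f x) x \<ge> 0" for x
      using power_mono[OF min[of x]]
      by (simp add: f_def inner_gram_shift power_mult_distrib dot_square_norm)
    show "inner (f v) v = 0"
      by (simp add: f_def inner_gram_shift dot_square_norm \<open>norm v = 1\<close>)
  qed
  then show ?thesis by (simp add: f_def)
qed

lemma mem_sing_vals_iff:
  "s \<in> sing_vals A \<longleftrightarrow> s > 0 \<and> (\<exists>v. v \<noteq> 0 \<and> ctrans A *v (A *v v) = s^2 *\<^sub>R v)"
proof -
  have "(ctrans A ** A) *v v = (\<chi> i. complex_of_real (s^2) * v $ i)
      \<longleftrightarrow> ctrans A *v (A *v v) = s^2 *\<^sub>R v" for v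
    unfolding matrix_vector_mul_assoc vec_eq_iff vector_scaleR_component
    by (simp add: scaleR_conv_of_real)
  then show ?thesis
    by (simp only: sing_vals_def mem_Collect_eq)
qed

lemma gram_eigenvectors_orthogonal:
  assumes "ctrans A *v (A *v v) = a *\<^sub>R v" "ctrans A *v (A *v w) = b *\<^sub>R w" "a \<noteq> b"
  shows "inner v w = 0"
proof -
  have "a * inner v w = inner (A *v v) (A *v w)"
    using inner_gram[of A v w] assms(1) by simp
  also have "\<dots> = b * inner v w"
    using inner_gram[of A w v] assms(2) by (simp add: inner_commute)
  finally show ?thesis using assms(3) by simp
qed

lemma finite_sing_vals: "finite (sing_vals A)"
proof -
  define V where "V s = (SOME v. v \<noteq> 0 \<and> ctrans A *v (A *v v) = s^2 *\<^sub>R v)" for s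
  have V: "V s \<noteq> 0" "ctrans A *v (A *v V s) = s^2 *\<^sub>R V s" if "s \<in> sing_vals A" for s
    using someI_ex[of "\<lambda>v. v \<noteq> 0 \<and> ctrans A *v (A *v v) = s^2 *\<^sub>R v"] that
    by (auto simp: V_def mem_sing_vals_iff)
  have orth: "inner (V s) (V t) = 0" if "s \<in> sing_vals A" "t \<in> sing_vals A" "s \<noteq> t" for s t
  proof (rule gram_eigenvectors_orthogonal[OF V(2) V(2)])
    show "s^2 \<noteq> t^2"
      using that by (auto simp: mem_sing_vals_iff power2_eq_iff_nonneg)
  qed (use that in auto)
  have "inj_on V (sing_vals A)"
    using orth V(1) by (metis inj_onI inner_eq_zero_iff)
  moreover have "independent (V ` sing_vals A)"
    using orth V(1) by (intro pairwise_orthogonal_independent) (auto simp: pairwise_def orthogonal_def)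
  ultimately show ?thesis
    using independent_imp_finite finite_imageD by blast
qed

lemma sigma_max_nonneg: "sigma_max A \<ge> 0"
proof (cases "sing_vals A = {}")
  case False
  then obtain s where s: "s \<in> sing_vals A" by blast
  then have "s \<le> Max (sing_vals A)" by (rule Max_ge[OF finite_sing_vals])
  with s False show ?thesis by (auto simp: sigma_max_def mem_sing_vals_iff)
qed (simp add: sigma_max_def)

lemma norm_mult_le_sigma_max: "norm (A *v x) \<le> sigma_max A * norm x"
proof -
  obtain v where "norm v = 1" and max: "\<And>x. norm (A *v x) \<le> norm (A *v v) * norm x"
    using rayleigh_max_exists[of A] by blast
  show ?thesis
  proof (cases "A *v v = 0")
    case True
    then show ?thesis using max[of x] sigma_max_nonneg[of A] by simp
  next
    case False
    with \<open>norm v = 1\<close> have "norm (A *v v) \<in> sing_vals A"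
      using gram_eigen_max[OF \<open>norm v = 1\<close> max]
      by (auto simp: mem_sing_vals_iff intro!: exI[of _ v])
    then have "norm (A *v v) \<le> sigma_max A"
      using finite_sing_vals[of A] by (auto simp: sigma_max_def)
    then show ?thesis
      using max[of x] by (meson mult_right_mono norm_ge_zero order_trans)
  qed
qed

lemma sigma_min_mult_le_norm:
  assumes "\<And>x. A *v x = 0 \<Longrightarrow> x = 0"
  shows "sigma_min A * norm x \<le> norm (A *v x)"
proof -
  obtain v where "norm v = 1" and min: "\<And>x. norm (A *v v) * norm x \<le> norm (A *v x)"
    using rayleigh_min_exists[of A] by blast
  then have "A *v v \<noteq> 0" using assms by force
  with \<open>norm v = 1\<close> have "norm (A *v v) \<in> sing_vals A"
    using gram_eigen_min[OF \<open>norm v = 1\<close> min]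
    by (auto simp: mem_sing_vals_iff intro!: exI[of _ v])
  then have "sigma_min A \<le> norm (A *v v)"
    using finite_sing_vals[of A] by (auto simp: sigma_min_def)
  then show ?thesis
    using min[of x] by (meson mult_right_mono norm_ge_zero order_trans)
qed

lemma matrix_add_product_injective:
  fixes G :: "complex^'n^'m" and B :: "complex^'k^'n" and C :: "complex^'k^'m"
  assumes inj: "\<And>x. C *v x = 0 \<Longrightarrow> x = 0"
    and small: "sigma_max G * sigma_max B < sigma_min C"
    and "(G ** B + C) *v x = 0"
  shows "x = 0"
proof -
  have "C *v x = - (G *v (B *v x))"
    using assms(3)
    by (simp add: matrix_vector_mult_add_rdistrib matrix_vector_mul_assoc eq_neg_iff_add_eq_0 add.commute)
  moreover have "sigma_min C * norm x \<le> norm (C *v x)"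
    using inj by (rule sigma_min_mult_le_norm)
  ultimately have "sigma_min C * norm x \<le> norm (G *v (B *v x))"
    by simp
  also have "\<dots> \<le> sigma_max G * norm (B *v x)"
    by (rule norm_mult_le_sigma_max)
  also have "\<dots> \<le> sigma_max G * (sigma_max B * norm x)"
    by (intro mult_left_mono norm_mult_le_sigma_max sigma_max_nonneg)
  finally have "(sigma_min C - sigma_max G * sigma_max B) * norm x \<le> 0"
    by (simp add: algebra_simps)
  with small show ?thesis
    by (simp add: mult_le_0_iff)
qed

lemma biorthogonal_exists:
  fixes H :: "complex^'k^'m"
  assumes "\<And>x. H *v x = 0 \<Longrightarrow> x = 0"
  obtains u where "\<And>k i. cinner (u k) (col H i) = (if k = i then 1 else 0)"
proof -
  obtain L where L: "L ** H = mat 1"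
    using assms matrix_left_invertible_ker by blast
  define u where "u k = (\<chi> a. cnj (L $ k $ a))" for k
  have "cinner (u k) (col H i) = (L ** H) $ k $ i" for k i
    by (simp add: u_def cinner_def col_def matrix_matrix_mult_def)
  with L have "cinner (u k) (col H i) = (if k = i then 1 else 0)" for k i
    by (simp add: mat_def)
  then show thesis
    by (rule that)
qed

lemma eff_chan_unit_phases: "eff_chan G Hr Hd (\<chi> n. 1) = col (G ** Hr + Hd)"
proof -
  have diag: "diag_mat (\<chi> n. 1) = mat 1"
    by (simp add: diag_mat_def mat_def vec_eq_iff)
  show ?thesis
    unfolding eff_chan_def diag matrix_mul_rid
    by (simp add: fun_eq_iff vec_eq_iff col_def matrix_matrix_mult_def matrix_vector_mult_def)
qed

definition interference_plus_noise ::
  "real \<Rightarrow> ('i \<Rightarrow> real) \<Rightarrow> ('i \<Rightarrow> complex^'m) \<Rightarrow> 'i set \<Rightarrow> complex^'m^'m" where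
  "interference_plus_noise s q h I = mat (of_real s) + (\<Sum>i\<in>I. q i *\<^sub>R outer (h i))"

lemma W_mat_eq_interference_plus_noise:
  "W_mat s G Hr Hd phi q k
    = interference_plus_noise s (\<lambda>i. q $ i) (eff_chan G Hr Hd phi) (UNIV - {k})"
  by (simp add: W_mat_def interference_plus_noise_def vec_eq_iff sum_component
      scaleR_conv_of_real[where 'a = complex])

lemma interference_plus_noise_mult:
  "interference_plus_noise s q h I *v y
    = of_real s *s y + (\<Sum>i\<in>I. (of_real (q i) * cinner (h i) y) *s h i)"
proof -
  have "(interference_plus_noise s q h I *v y) $ a
      = of_real s * y $ a + (\<Sum>i\<in>I. of_real (q i) * cinner (h i) y * h i $ a)" for a
  proof -
    have "(interference_plus_noise s q h I *v y) $ a
        = (\<Sum>b\<in>UNIV. (if a = b then of_real s * y $ b else 0)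
          + (\<Sum>i\<in>I. of_real (q i) * (h i $ a * cnj (h i $ b))) * y $ b)"
      unfolding matrix_vector_mult_def vec_lambda_beta
      by (rule sum.cong[OF refl]) (simp add: interference_plus_noise_def mat_def outer_def
          sum_component scaleR_conv_of_real[where 'a = complex] distrib_right)
    also have "\<dots> = of_real s * y $ a + (\<Sum>i\<in>I. of_real (q i) * cinner (h i) y * h i $ a)"
      by (simp add: sum.distrib cinner_def sum_distrib_left sum_distrib_right mult_ac sum.swap[of _ I])
    finally show ?thesis .
  qed
  then show ?thesis
    by (simp add: vec_eq_iff sum_component)
qed

lemma cinner_interference_plus_noise:
  "cinner x (interference_plus_noise s q h I *v y)
    = of_real s * cinner x y + (\<Sum>i\<in>I. of_real (q i) * cinner (h i) y * cinner x (h i))"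
  by (simp add: interference_plus_noise_mult cinner_add_right cinner_sum_right cinner_scale_right)

lemma Re_cinner_interference_plus_noise_ge:
  assumes "\<And>i. i \<in> I \<Longrightarrow> q i \<ge> 0"
  shows "s * (norm y)^2 \<le> Re (cinner y (interference_plus_noise s q h I *v y))"
proof -
  have "cinner (h i) y * cinner y (h i) = of_real ((cmod (cinner (h i) y))^2)" for i
    by (simp only: cinner_commute[of y] complex_norm_square)
  then have "Re (cinner y (interference_plus_noise s q h I *v y))
      = s * (norm y)^2 + (\<Sum>i\<in>I. q i * (cmod (cinner (h i) y))^2)"
    by (simp add: cinner_interference_plus_noise cinner_self Re_sum mult.assoc)
  moreover have "(\<Sum>i\<in>I. q i * (cmod (cinner (h i) y))^2) \<ge> 0"
    using assms by (intro sum_nonneg) simp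
  ultimately show ?thesis by simp
qed

lemma invertible_interference_plus_noise:
  assumes "s > 0" and "\<And>i. i \<in> I \<Longrightarrow> q i \<ge> 0"
  shows "invertible (interference_plus_noise s q h I)"
proof -
  have "y = 0" if "interference_plus_noise s q h I *v y = 0" for y
  proof -
    have "s * (norm y)^2 \<le> Re (cinner y (interference_plus_noise s q h I *v y))"
      using assms(2) by (rule Re_cinner_interference_plus_noise_ge)
    with that \<open>s > 0\<close> show ?thesis
      by (simp add: cinner_def mult_le_0_iff)
  qed
  then show ?thesis
    by (simp add: invertible_left_inverse matrix_left_invertible_ker)
qed

lemma zero_forcing_bound:
  assumes "s > 0" and q: "\<And>i. i \<in> I \<Longrightarrow> q i \<ge> 0"
    and "cinner u (h k) = 1" and "\<And>i. i \<in> I \<Longrightarrow> cinner u (h i) = 0"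
  shows "1 / (s * (norm u)^2) \<le> Re (cinner (h k) (matrix_inv (interference_plus_noise s q h I) *v h k))"
proof -
  let ?W = "interference_plus_noise s q h I"
  have "u \<noteq> 0"
    using assms(3) by (auto simp: cinner_def)
  define y where "y = matrix_inv ?W *v h k"
  have "invertible ?W"
    using assms(1,2) by (rule invertible_interference_plus_noise)
  then have Wy: "?W *v y = h k"
    by (simp add: y_def matrix_vector_mul_assoc matrix_inv_right)
  have "of_real s * cinner u y = 1"
    using cinner_interference_plus_noise[of u s q h I y] assms(3,4) by (simp add: Wy)
  then have "Re (of_real s * cinner u y) = 1"
    by simp
  then have "s * inner u y = 1"
    by (simp add: inner_eq_Re_cinner)
  then have "1 \<le> s * (norm u * norm y)"
    using \<open>s > 0\<close> norm_cauchy_schwarz[of u y] by (metis mult_left_mono less_imp_le)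
  then have "1 \<le> s * (norm y)^2 * (s * (norm u)^2)"
    using one_le_power[of "s * (norm u * norm y)" 2] by (simp add: power2_eq_square mult_ac)
  moreover have "s * (norm u)^2 > 0"
    using \<open>s > 0\<close> \<open>u \<noteq> 0\<close> by simp
  ultimately have "1 / (s * (norm u)^2) \<le> s * (norm y)^2"
    by (simp add: pos_divide_le_eq)
  also have "\<dots> \<le> Re (cinner y (?W *v y))"
    using q by (rule Re_cinner_interference_plus_noise_ge)
  also have "\<dots> = Re (cinner (h k) y)"
    by (simp add: Wy cinner_commute[of y])
  finally show ?thesis
    by (simp add: y_def)
qed

lemma Re_sinr:
  "Re (sinr s G Hr Hd phi q k)
    = q $ k * Re (cinner (eff_chan G Hr Hd phi k)
        (matrix_inv (W_mat s G Hr Hd phi q k) *v eff_chan G Hr Hd phi k))"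
  by (simp add: sinr_def herm_form_def cinner_def)

lemma sinr_unit_phases_ge:
  assumes "sigma2 > 0" and "\<And>i. q $ i \<ge> 0"
    and "\<And>k i. cinner (u k) (col (G ** Hr + Hd) i) = (if k = i then 1 else 0)"
  shows "q $ k / (sigma2 * (norm (u k))^2) \<le> Re (sinr sigma2 G Hr Hd (\<chi> n. 1) q k)"
proof -
  let ?H = "G ** Hr + Hd"
  let ?W = "interference_plus_noise sigma2 (\<lambda>i. q $ i) (col ?H) (UNIV - {k})"
  have "1 / (sigma2 * (norm (u k))^2) \<le> Re (cinner (col ?H k) (matrix_inv ?W *v col ?H k))"
    using assms(1) by (rule zero_forcing_bound) (auto simp: assms(2,3))
  then have "q $ k * (1 / (sigma2 * (norm (u k))^2))
      \<le> q $ k * Re (cinner (col ?H k) (matrix_inv ?W *v col ?H k))"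
    using assms(2) by (rule mult_left_mono)
  then show ?thesis
    by (simp add: Re_sinr W_mat_eq_interference_plus_noise eff_chan_unit_phases)
qed

theorem lemma1:
  fixes G :: "complex^'n::finite^'m::finite"
    and Hr :: "complex^'k::finite^'n"
    and Hd :: "complex^'k^'m"
    and sigma2 :: real
  assumes "CARD('k) \<le> CARD('m)"
    and "sigma2 > 0"
    and "rank Hd = CARD('k)"
    and "sigma_max G * sigma_max Hr < sigma_min Hd"
  shows "\<forall>r :: real^'k. (\<forall>k. r $ k \<ge> 0) \<longrightarrow>
           (\<exists>phi :: complex^'n. \<exists>q :: real^'k.
              (\<forall>n. cmod (phi $ n) = 1) \<and> (\<forall>k. q $ k > 0) \<and>
              (\<forall>k. Re (sinr sigma2 G Hr Hd phi q k) \<ge> r $ k))"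
proof (intro allI impI)
  fix r :: "real^'k"
  assume "\<forall>k. r $ k \<ge> 0"
  define H where "H = G ** Hr + Hd"
  have inj_H: "x = 0" if "H *v x = 0" for x
  proof (rule matrix_add_product_injective[OF _ assms(4)])
    show "Hd *v x = 0 \<Longrightarrow> x = 0" for x
      using assms(3) by (rule full_column_rank_imp_inj)
  qed (use that in \<open>simp add: H_def\<close>)
  obtain u where u: "\<And>k i. cinner (u k) (col H i) = (if k = i then 1 else 0)"
    using biorthogonal_exists inj_H by blast
  define q :: "real^'k" where "q = (\<chi> k. max 1 (r $ k * sigma2 * (norm (u k))^2))"
  have "r $ k \<le> Re (sinr sigma2 G Hr Hd (\<chi> n. 1) q k)" for k
  proof -
    have "u k \<noteq> 0"
      using u[of k k] by (auto simp: cinner_def)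
    then have "r $ k \<le> q $ k / (sigma2 * (norm (u k))^2)"
      using assms(2) by (simp add: pos_le_divide_eq q_def)
    also have "\<dots> \<le> Re (sinr sigma2 G Hr Hd (\<chi> n. 1) q k)"
      using assms(2) by (rule sinr_unit_phases_ge) (auto simp: q_def u[unfolded H_def])
    finally show ?thesis .
  qed
  then show "\<exists>phi :: complex^'n. \<exists>q :: real^'k.
              (\<forall>n. cmod (phi $ n) = 1) \<and> (\<forall>k. q $ k > 0) \<and>
              (\<forall>k. Re (sinr sigma2 G Hr Hd phi q k) \<ge> r $ k)"
    by (intro exI[of _ "\<chi> n. 1"] exI[of _ q]) (auto simp: q_def less_max_iff_disj)
qed

end
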